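(* Let $m,n,s,k,c$ be positive integers such that $2\leq s\leq n$, $2\leq k\leq m$ and $ms=nk$. A $\mathrm{MS}^0_{\mathbb Z_{nkc}}(m,n;s,k;c)$ exists if and only if $nkc$ is odd.
   Context: Let $(\Gamma,+)$ be an abelian group and $\Omega\subseteq\Gamma$ with $|\Omega|>1$. A partially filled array is an array in which some cells may be empty. A zero-sum magic partially filled array set $\mathrm{MS}^0_\Omega(m,n;s,k;c)$ is a set of $c$ partially filled $m\times n$ arrays with entries in $\Omega$ such that every element of $\Omega$ appears exactly once in exactly one of the arrays, every array has exactly $s$ filled cells in each row and exactly $k$ in each column, and in every array the entries of each row and of each column sum to $0_\Gamma$. $\mathbb Z_N$ is the cyclic group of order $N$; here $\Omega=\Gamma=\mathbb Z_{nkc}$. *)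

theory Defs
  imports Main
begin

text \<open>A set of c partially filled m x n arrays with entries in Z_N (N = nkc), elements of
Z_N represented by their canonical residues 0..N-1. A i r j = Some v means cell (r,j) of
array i (i < c, r < m, j < n) is filled with v; None means empty.\<close>

definition is_MS0_Zmod :: "nat \<Rightarrow> nat \<Rightarrow> nat \<Rightarrow> nat \<Rightarrow> nat \<Rightarrow> nat \<Rightarrow>
    (nat \<Rightarrow> nat \<Rightarrow> nat \<Rightarrow> nat option) \<Rightarrow> bool" where
  "is_MS0_Zmod N m n s k c A \<longleftrightarrow>
     (\<forall>i r j. A i r j \<noteq> None \<longrightarrow> i < c \<and> r < m \<and> j < n)
   \<and> bij_betw (\<lambda>(i, r, j). the (A i r j)) {(i, r, j). A i r j \<noteq> None} {0..<N}
   \<and> (\<forall>i<c. \<forall>r<m. card {j. j < n \<and> A i r j \<noteq> None} = s)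
   \<and> (\<forall>i<c. \<forall>j<n. card {r. r < m \<and> A i r j \<noteq> None} = k)
   \<and> (\<forall>i<c. \<forall>r<m. (\<Sum>j\<in>{j. j < n \<and> A i r j \<noteq> None}. the (A i r j)) mod N = 0)
   \<and> (\<forall>i<c. \<forall>j<n. (\<Sum>r\<in>{r. r < m \<and> A i r j \<noteq> None}. the (A i r j)) mod N = 0)"

definition MS0_exists :: "nat \<Rightarrow> nat \<Rightarrow> nat \<Rightarrow> nat \<Rightarrow> nat \<Rightarrow> bool" where
  "MS0_exists m n s k c \<longleftrightarrow> (\<exists>A. is_MS0_Zmod (n * k * c) m n s k c A)"

end

theory Submission
  imports Defs "HOL-Number_Theory.Cong"
begin

text \<open>
  Necessity: the entries of all arrays together are 0, ..., N - 1, whose sum is congruent to N/2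
  modulo an even N, although it is a sum of row sums that all vanish modulo N.

  Sufficiency: with g = gcd m n write m = g m', n = g n', s = d n' and k = d m', where d \<le> g.
  Fill the cells of the cyclic band (j - r) mod g < d and label each of them by a two-digit number
  P + D W with 0 \<le> P < D and 0 \<le> W < N/D. The high digit is W = (w u + b) mod (N/D), where u
  enumerates the filled cells with equal low digit, the weight w \<in> {\<plusminus>1, \<plusminus>2} is a unit modulo the
  odd number N/D and sums to zero along every line, and b cancels the carries of the low digits.
  For d > 1 the low digit is the offset (j - r) mod g itself (D = d); for d = 1 it is a
  Chinese-remainder labelling of the k \<times> s grid whose line sums vanish modulo D = k s.
\<close>

section \<open>Necessity\<close>

lemma sum_lessThan_even_nat: "(\<Sum>i<2*M. i) + M = 2*M*(M::nat)"
  by (induction M) (auto simp: algebra_simps)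

lemma is_MS0_Zmod_odd:
  assumes A: "is_MS0_Zmod N m n s k c A" and "0 < N"
  shows "odd N"
proof
  assume "even N"
  then obtain M where N: "N = 2 * M" and "0 < M" using \<open>0 < N\<close> by auto
  let ?cells = "{(i, r, j). A i r j \<noteq> None}"
  let ?row = "\<lambda>i r. {j. j < n \<and> A i r j \<noteq> None}"
  have dom: "\<And>i r j. A i r j \<noteq> None \<Longrightarrow> i < c \<and> r < m \<and> j < n"
    and bij: "bij_betw (\<lambda>(i, r, j). the (A i r j)) ?cells {0..<N}"
    and rows: "\<And>i r. i < c \<Longrightarrow> r < m \<Longrightarrow> N dvd (\<Sum>j\<in>?row i r. the (A i r j))"
    using A unfolding is_MS0_Zmod_def by (auto simp: dvd_eq_mod_eq_0)
  have "?cells = Sigma {..<c} (\<lambda>i. Sigma {..<m} (\<lambda>r. ?row i r))"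
    using dom by auto
  then have "(\<Sum>v<N. v) = (\<Sum>i<c. \<Sum>r<m. \<Sum>j\<in>?row i r. the (A i r j))"
    using sum.reindex_bij_betw[OF bij, of id] by (simp add: atLeast0LessThan sum.Sigma)
  also have "N dvd \<dots>"
    by (rule dvd_sum, rule dvd_sum) (use rows in auto)
  finally have "N dvd (\<Sum>v<N. v)" .
  moreover have "N dvd (\<Sum>v<N. v) + M"
    using sum_lessThan_even_nat[of M] N by simp
  ultimately have "N dvd M"
    by (simp add: dvd_add_right_iff)
  then show False
    using N \<open>0 < M\<close> by (auto dest: dvd_imp_le)
qed

section \<open>Two-digit labellings\<close>

lemma bij_betw_if_inj_on_card_eq:
  assumes "inj_on f A" "f ` A \<subseteq> B" "card A = card B" "finite B"
  shows "bij_betw f A B"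
  using assms unfolding bij_betw_def by (simp add: card_image card_subset_eq)

lemma is_MS0_Zmod_of_labelling:
  fixes F :: "nat \<Rightarrow> nat \<Rightarrow> bool" and V :: "nat \<Rightarrow> nat \<Rightarrow> nat \<Rightarrow> int"
  assumes row_card: "\<And>r. r < m \<Longrightarrow> card {j. j < n \<and> F r j} = s"
    and col_card: "\<And>j. j < n \<Longrightarrow> card {r. r < m \<and> F r j} = k"
    and N: "N = c * m * s"
    and inj: "inj_on (\<lambda>(i, r, j). V i r j) {(i, r, j). i < c \<and> r < m \<and> j < n \<and> F r j}"
    and range: "\<And>i r j. i < c \<Longrightarrow> r < m \<Longrightarrow> j < n \<Longrightarrow> F r j \<Longrightarrow> 0 \<le> V i r j \<and> V i r j < int N"
    and rows: "\<And>i r. i < c \<Longrightarrow> r < m \<Longrightarrow> int N dvd (\<Sum>j | j < n \<and> F r j. V i r j)"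
    and cols: "\<And>i j. i < c \<Longrightarrow> j < n \<Longrightarrow> int N dvd (\<Sum>r | r < m \<and> F r j. V i r j)"
  shows "\<exists>A. is_MS0_Zmod N m n s k c A"
proof
  define A where
    "A i r j = (if i < c \<and> r < m \<and> j < n \<and> F r j then Some (nat (V i r j)) else None)" for i r j
  let ?cells = "{(i, r, j). i < c \<and> r < m \<and> j < n \<and> F r j}"
  have cells: "{(i, r, j). A i r j \<noteq> None} = ?cells"
    by (auto simp: A_def)
  have val: "int (the (A i r j)) = V i r j" if "i < c" "r < m" "j < n" "F r j" for i r j
    using range[OF that] that by (simp add: A_def)
  have row: "{j. j < n \<and> A i r j \<noteq> None} = {j. j < n \<and> F r j}" if "i < c" "r < m" for i r
    using that by (auto simp: A_def)
  have col: "{r. r < m \<and> A i r j \<noteq> None} = {r. r < m \<and> F r j}" if "i < c" "j < n" for i j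
    using that by (auto simp: A_def)
  have "card ?cells = N"
  proof -
    have "?cells = Sigma {..<c} (\<lambda>i. Sigma {..<m} (\<lambda>r. {j. j < n \<and> F r j}))"
      by auto
    then show ?thesis
      by (simp add: card_SigmaI row_card N)
  qed
  moreover have "inj_on (\<lambda>(i, r, j). the (A i r j)) ?cells"
  proof (rule inj_on_imageI2)
    show "inj_on (int \<circ> (\<lambda>(i, r, j). the (A i r j))) ?cells"
      using inj by (rule inj_on_cong[THEN iffD1, rotated]) (auto simp: val)
  qed
  moreover have "(\<lambda>(i, r, j). the (A i r j)) ` ?cells \<subseteq> {0..<N}"
    using range by (force simp: A_def nat_less_iff)
  ultimately have "bij_betw (\<lambda>(i, r, j). the (A i r j)) ?cells {0..<N}"
    by (intro bij_betw_if_inj_on_card_eq) auto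
  moreover have "(\<Sum>j | j < n \<and> A i r j \<noteq> None. the (A i r j)) mod N = 0" if "i < c" "r < m" for i r
  proof -
    have "int (\<Sum>j | j < n \<and> A i r j \<noteq> None. the (A i r j)) = (\<Sum>j | j < n \<and> F r j. V i r j)"
      unfolding of_nat_sum row[OF that] using that by (intro sum.cong) (auto simp: val)
    then show ?thesis
      using rows[OF that] by (simp only: int_dvd_int_iff[symmetric] flip: dvd_eq_mod_eq_0)
  qed
  moreover have "(\<Sum>r | r < m \<and> A i r j \<noteq> None. the (A i r j)) mod N = 0" if "i < c" "j < n" for i j
  proof -
    have "int (\<Sum>r | r < m \<and> A i r j \<noteq> None. the (A i r j)) = (\<Sum>r | r < m \<and> F r j. V i r j)"
      unfolding of_nat_sum col[OF that] using that by (intro sum.cong) (auto simp: val)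
    then show ?thesis
      using cols[OF that] by (simp only: int_dvd_int_iff[symmetric] flip: dvd_eq_mod_eq_0)
  qed
  moreover have "\<forall>i r j. A i r j \<noteq> None \<longrightarrow> i < c \<and> r < m \<and> j < n"
    by (simp add: A_def)
  ultimately show "is_MS0_Zmod N m n s k c A"
    unfolding is_MS0_Zmod_def cells using row_card col_card by (simp add: row col del: not_None_eq)
qed

lemma mod_affine_inj:
  fixes a b Q u v :: int
  assumes "coprime a Q" "0 \<le> u" "u < Q" "0 \<le> v" "v < Q"
    and "(a * u + b) mod Q = (a * v + b) mod Q"
  shows "u = v"
proof -
  have "Q dvd a * (u - v)"
    using assms(6) by (simp add: mod_eq_dvd_iff algebra_simps)
  then have "Q dvd u - v"
    using assms(1) by (simp add: coprime_commute coprime_dvd_mult_right_iff)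
  then have "u mod Q = v mod Q"
    by (simp add: mod_eq_dvd_iff)
  then show ?thesis
    using assms(2-5) by simp
qed

lemma bij_betw_mult_mod:
  fixes a :: int
  assumes "coprime a (int n)" "0 < n"
  shows "bij_betw (\<lambda>y. nat ((a * int y) mod int n)) {..<n} {..<n}"
proof (rule bij_betw_if_inj_on_card_eq)
  show "inj_on (\<lambda>y. nat ((a * int y) mod int n)) {..<n}"
  proof (rule inj_onI)
    fix y y' assume y: "y \<in> {..<n}" "y' \<in> {..<n}"
      and "nat ((a * int y) mod int n) = nat ((a * int y') mod int n)"
    then have "(a * int y + 0) mod int n = (a * int y' + 0) mod int n"
      using assms(2) by (subst (asm) eq_nat_nat_iff) auto
    then have "int y = int y'"
      using mod_affine_inj[OF assms(1), of "int y" "int y'" 0] y by simp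
    then show "y = y'"
      by simp
  qed
  show "(\<lambda>y. nat ((a * int y) mod int n)) ` {..<n} \<subseteq> {..<n}"
    using assms by (auto simp: nat_less_iff)
qed simp_all

lemma two_digit_bounds:
  fixes x y D Q :: int
  assumes "0 \<le> x" "x < D" "0 < Q"
  shows "0 \<le> x + D * (y mod Q)" "x + D * (y mod Q) < D * Q"
proof -
  have "0 \<le> y mod Q" "y mod Q \<le> Q - 1"
    using \<open>0 < Q\<close> by auto
  moreover from this have "D * (y mod Q) \<le> D * (Q - 1)"
    using assms by (intro mult_left_mono) auto
  ultimately show "0 \<le> x + D * (y mod Q)" "x + D * (y mod Q) < D * Q"
    using assms by (auto simp: algebra_simps)
qed

lemma two_digit_inj_on:
  fixes f P u w b :: "'a \<Rightarrow> int" and D Q :: int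
  assumes f: "\<And>p. p \<in> S \<Longrightarrow> f p = P p + D * ((w p * u p + b p) mod Q)"
    and P: "\<And>p. p \<in> S \<Longrightarrow> 0 \<le> P p \<and> P p < D"
    and u: "\<And>p. p \<in> S \<Longrightarrow> 0 \<le> u p \<and> u p < Q"
    and w: "\<And>p. p \<in> S \<Longrightarrow> coprime (w p) Q"
    and determined: "\<And>p q. p \<in> S \<Longrightarrow> q \<in> S \<Longrightarrow> P p = P q \<Longrightarrow> w p = w q \<and> b p = b q"
    and separated: "\<And>p q. p \<in> S \<Longrightarrow> q \<in> S \<Longrightarrow> P p = P q \<Longrightarrow> u p = u q \<Longrightarrow> p = q"
  shows "inj_on f S"
proof (rule inj_onI)
  fix p q
  assume p: "p \<in> S" and q: "q \<in> S" and "f p = f q"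
  then have eq: "P p + D * ((w p * u p + b p) mod Q) = P q + D * ((w q * u q + b q) mod Q)"
    using f by simp
  have "P p = (P p + D * ((w p * u p + b p) mod Q)) mod D"
    using P[OF p] by simp
  also have "\<dots> = P q"
    unfolding eq using P[OF q] by simp
  finally have P_eq: "P p = P q" .
  then have "(w p * u p + b p) mod Q = (w p * u q + b p) mod Q"
    using eq determined[OF p q] P[OF p] by simp
  then have "u p = u q"
    using mod_affine_inj w[OF p] u[OF p] u[OF q] by blast
  then show "p = q"
    using separated[OF p q P_eq] by simp
qed

lemma dvd_sum_two_digit_iff:
  fixes x y :: "'a \<Rightarrow> int" and D Q :: int
  shows "D * Q dvd (\<Sum>p\<in>A. x p + D * (y p mod Q)) \<longleftrightarrow> D * Q dvd (\<Sum>p\<in>A. x p + D * y p)"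
proof -
  have "(\<Sum>p\<in>A. x p + D * (y p mod Q)) = (\<Sum>p\<in>A. x p + D * y p) - D * Q * (\<Sum>p\<in>A. y p div Q)"
    by (simp add: minus_div_mult_eq_mod[symmetric] sum_subtractf sum.distrib sum_distrib_left algebra_simps)
  then show ?thesis
    by (simp add: dvd_diff_left_iff)
qed

section \<open>Zero-sum weights\<close>

lemma sum_lessThan_odd:
  "(\<Sum>i<2*h+1. of_nat i :: 'a::comm_semiring_1) = of_nat h * of_nat (2*h+1)"
proof -
  have "(\<Sum>i<2*h+1. i) = h * (2*h+1)"
    by (induction h) (simp_all add: algebra_simps)
  then show ?thesis
    unfolding of_nat_sum[symmetric] of_nat_mult[symmetric] by (simp only: of_nat_eq_iff)
qed

lemma sum_lessThan_antisymmetric: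
  fixes f :: "nat \<Rightarrow> int"
  assumes "\<And>p. p < n \<Longrightarrow> f (n - Suc p) = - f p"
  shows "(\<Sum>p<n. f p) = 0"
proof -
  have "(\<Sum>p<n. f p) = (\<Sum>p<n. f (n - Suc p))"
    by (rule sum.nat_diff_reindex[symmetric])
  also have "\<dots> = - (\<Sum>p<n. f p)"
    by (simp add: assms sum_negf)
  finally show ?thesis
    by simp
qed

text \<open>The value at t = 1 makes the profile sum to 1 over {1..h}, balancing the centre value -2.\<close>

definition weight_profile :: "nat \<Rightarrow> nat \<Rightarrow> int" where
  "weight_profile h t =
     (if t = 0 then -2 else if t = 1 then (if even h then 2 else 1) else if even t then -1 else 1)"

definition zero_sum_weight :: "nat \<Rightarrow> nat \<Rightarrow> int" where
  "zero_sum_weight h p = weight_profile h (if p \<le> h then h - p else p - h)"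

lemma sum_alternating_signs:
  "1 \<le> (h::nat) \<Longrightarrow> (\<Sum>t=2..h. if even t then -1 else 1 :: int) = (if even h then -1 else 0)"
proof (induction h rule: dec_induct)
  case (step h)
  then have "{2..Suc h} = insert (Suc h) {2..h}"
    by auto
  with step show ?case
    by simp
qed simp

lemma sum_weight_profile: "1 \<le> h \<Longrightarrow> (\<Sum>t=1..h. weight_profile h t) = 1"
proof -
  assume "1 \<le> h"
  then have "{1..h} = insert 1 {2..h}"
    by auto
  moreover have "(\<Sum>t=2..h. weight_profile h t) = (\<Sum>t=2..h. if even t then -1 else 1)"
    by (rule sum.cong) (auto simp: weight_profile_def)
  ultimately show ?thesis
    using sum_alternating_signs[OF \<open>1 \<le> h\<close>] by (simp add: weight_profile_def)
qed

lemma sum_distance_from_centre: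
  fixes f :: "nat \<Rightarrow> int"
  shows "(\<Sum>p<2*h+1. f (if p \<le> h then h - p else p - h)) = f 0 + 2 * (\<Sum>t=1..h. f t)"
    (is "(\<Sum>p<2*h+1. ?g p) = _")
proof -
  have split: "{..<2*h+1} = {..<h} \<union> {h} \<union> {h+1..2*h}"
    by auto
  have "(\<Sum>p<2*h+1. ?g p) = (\<Sum>p<h. ?g p) + f 0 + (\<Sum>p=h+1..2*h. ?g p)"
    unfolding split by (subst sum.union_disjoint; auto)+
  moreover have "(\<Sum>p<h. ?g p) = (\<Sum>t=1..h. f t)"
    by (rule sum.reindex_bij_witness[of _ "\<lambda>t. h - t" "\<lambda>p. h - p"]) auto
  moreover have "(\<Sum>p=h+1..2*h. ?g p) = (\<Sum>t=1..h. f t)"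
    by (rule sum.reindex_bij_witness[of _ "\<lambda>t. h + t" "\<lambda>p. p - h"]) auto
  ultimately show ?thesis
    by simp
qed

lemma sum_zero_sum_weight:
  assumes "1 \<le> h"
  shows "(\<Sum>p<2*h+1. zero_sum_weight h p) = 0"
  unfolding zero_sum_weight_def sum_distance_from_centre sum_weight_profile[OF assms]
  by (simp add: weight_profile_def)

lemma zero_sum_weight_reflect: "p \<le> 2*h \<Longrightarrow> zero_sum_weight h (2*h - p) = zero_sum_weight h p"
  unfolding zero_sum_weight_def by (rule arg_cong[where f = "weight_profile h"]) auto

lemma sum_mult_zero_sum_weight: "1 \<le> h \<Longrightarrow> (\<Sum>p<2*h+1. int p * zero_sum_weight h p) = 0"
proof -
  assume "1 \<le> h"
  have "(\<Sum>p<2*h+1. (int p - int h) * zero_sum_weight h p) = 0"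
  proof (rule sum_lessThan_antisymmetric)
    fix p assume "p < 2*h+1"
    then show "(int (2*h+1 - Suc p) - int h) * zero_sum_weight h (2*h+1 - Suc p)
             = - ((int p - int h) * zero_sum_weight h p)"
      using zero_sum_weight_reflect[of p h] by (simp add: of_nat_diff algebra_simps)
  qed
  moreover have "(\<Sum>p<2*h+1. int p * zero_sum_weight h p)
      = (\<Sum>p<2*h+1. (int p - int h) * zero_sum_weight h p) + int h * (\<Sum>p<2*h+1. zero_sum_weight h p)"
    by (simp only: sum_distrib_left flip: sum.distrib) (simp add: algebra_simps)
  ultimately show ?thesis
    using sum_zero_sum_weight[OF \<open>1 \<le> h\<close>] by simp
qed

lemma coprime_zero_sum_weight: "odd Q \<Longrightarrow> coprime (zero_sum_weight h p) (Q::int)"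
  by (auto simp: zero_sum_weight_def weight_profile_def coprime_commute)

section \<open>Cyclic bands\<close>

definition cyclic_offset :: "nat \<Rightarrow> nat \<Rightarrow> nat \<Rightarrow> nat" where
  "cyclic_offset g r j = nat ((int j - int r) mod int g)"

lemma int_cyclic_offset: "0 < g \<Longrightarrow> int (cyclic_offset g r j) = (int j - int r) mod int g"
  by (simp add: cyclic_offset_def)

lemma cyclic_offset_less: "0 < g \<Longrightarrow> cyclic_offset g r j < g"
  by (simp add: cyclic_offset_def nat_less_iff)

lemma cyclic_offset_band_column:
  assumes "0 < g" "e < g"
  shows "cyclic_offset g r (g*t + (r+e) mod g) = e"
proof -
  have "(int (g*t + (r+e) mod g) - int r) mod int g
      = ((int r + int e) mod int g - int r + int t * int g) mod int g"
    by (simp add: of_nat_mod algebra_simps)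
  also have "\<dots> = (int r + int e - int r) mod int g"
    by (simp only: mod_mult_self1 mod_diff_left_eq)
  also have "\<dots> = int e"
    using assms by simp
  finally have "(int (g*t + (r+e) mod g) - int r) mod int g = int e" .
  then show ?thesis
    by (simp add: cyclic_offset_def)
qed

lemma cyclic_offset_band_row:
  assumes "0 < g" "e < g"
  shows "cyclic_offset g (g*q + cyclic_offset g e j) j = e"
proof -
  have "(int j - int (g*q + cyclic_offset g e j)) mod int g
      = (int j - (int j - int e) mod int g + (- int q) * int g) mod int g"
    using assms by (simp add: int_cyclic_offset algebra_simps)
  also have "\<dots> = (int j - (int j - int e)) mod int g"
    by (simp only: mod_mult_self1 mod_diff_right_eq)
  also have "\<dots> = int e"
    using assms by simp
  finally have "(int j - int (g*q + cyclic_offset g e j)) mod int g = int e" .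
  then show ?thesis
    by (simp add: cyclic_offset_def)
qed

lemma mod_add_cyclic_offset: "0 < g \<Longrightarrow> (r + cyclic_offset g r j) mod g = j mod g"
proof -
  assume "0 < g"
  then have "int ((r + cyclic_offset g r j) mod g) = (int r + (int j - int r) mod int g) mod int g"
    by (simp add: of_nat_mod int_cyclic_offset)
  also have "\<dots> = int (j mod g)"
    by (simp add: mod_add_right_eq of_nat_mod)
  finally show ?thesis
    by simp
qed

lemma cyclic_offset_cyclic_offset: "0 < g \<Longrightarrow> cyclic_offset g (cyclic_offset g r j) j = r mod g"
proof -
  assume "0 < g"
  then have "int (cyclic_offset g (cyclic_offset g r j) j) = (int j - (int j - int r) mod int g) mod int g"
    by (simp add: int_cyclic_offset)
  also have "\<dots> = int (r mod g)"
    by (simp add: mod_diff_right_eq of_nat_mod)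
  finally show ?thesis
    by simp
qed

lemma mod_eq_if_cyclic_offset_less_one: "0 < g \<Longrightarrow> cyclic_offset g r j < 1 \<Longrightarrow> j mod g = r mod g"
  using mod_add_cyclic_offset[of g r j] by simp

lemma bij_betw_band_row:
  assumes "0 < g" "d \<le> g"
  shows "bij_betw (\<lambda>(e, t). g*t + (r+e) mod g) ({..<d} \<times> {..<n'})
           {j. j < g*n' \<and> cyclic_offset g r j < d}"
proof (rule bij_betw_byWitness[where f' = "\<lambda>j. (cyclic_offset g r j, j div g)"])
  have "g*t + (r+e) mod g < g*n'" if "t < n'" for t e
  proof -
    have "g*t + (r+e) mod g < g*(t+1)"
      using assms by simp
    also have "\<dots> \<le> g*n'"
      using that by (intro mult_le_mono2) simp
    finally show ?thesis .
  qed
  then show "(\<lambda>(e, t). g*t + (r+e) mod g) ` ({..<d} \<times> {..<n'}) \<subseteq> {j. j < g*n' \<and> cyclic_offset g r j < d}"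
    using assms by (auto simp: cyclic_offset_band_column)
  show "\<forall>p\<in>{..<d} \<times> {..<n'}. (\<lambda>j. (cyclic_offset g r j, j div g)) ((\<lambda>(e, t). g*t + (r+e) mod g) p) = p"
    using assms by (auto simp: cyclic_offset_band_column)
  show "\<forall>j\<in>{j. j < g*n' \<and> cyclic_offset g r j < d}.
      (\<lambda>(e, t). g*t + (r+e) mod g) ((\<lambda>j. (cyclic_offset g r j, j div g)) j) = j"
    using assms by (simp add: mod_add_cyclic_offset)
  show "(\<lambda>j. (cyclic_offset g r j, j div g)) ` {j. j < g*n' \<and> cyclic_offset g r j < d} \<subseteq> {..<d} \<times> {..<n'}"
    using assms by (auto simp: div_less_iff_less_mult mult.commute)
qed

lemma bij_betw_band_column:
  assumes "0 < g" "d \<le> g"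
  shows "bij_betw (\<lambda>(e, q). g*q + cyclic_offset g e j) ({..<d} \<times> {..<m'})
           {r. r < g*m' \<and> cyclic_offset g r j < d}"
proof (rule bij_betw_byWitness[where f' = "\<lambda>r. (cyclic_offset g r j, r div g)"])
  have "g*q + cyclic_offset g e j < g*m'" if "q < m'" for q e
  proof -
    have "g*q + cyclic_offset g e j < g*(q+1)"
      using assms cyclic_offset_less by simp
    also have "\<dots> \<le> g*m'"
      using that by (intro mult_le_mono2) simp
    finally show ?thesis .
  qed
  then show "(\<lambda>(e, q). g*q + cyclic_offset g e j) ` ({..<d} \<times> {..<m'}) \<subseteq> {r. r < g*m' \<and> cyclic_offset g r j < d}"
    using assms by (auto simp: cyclic_offset_band_row)
  show "\<forall>p\<in>{..<d} \<times> {..<m'}. (\<lambda>r. (cyclic_offset g r j, r div g)) ((\<lambda>(e, q). g*q + cyclic_offset g e j) p) = p"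
    using assms by (auto simp: cyclic_offset_band_row cyclic_offset_less)
  show "\<forall>r\<in>{r. r < g*m' \<and> cyclic_offset g r j < d}.
      (\<lambda>(e, q). g*q + cyclic_offset g e j) ((\<lambda>r. (cyclic_offset g r j, r div g)) r) = r"
    using assms by (simp add: cyclic_offset_cyclic_offset)
  show "(\<lambda>r. (cyclic_offset g r j, r div g)) ` {r. r < g*m' \<and> cyclic_offset g r j < d} \<subseteq> {..<d} \<times> {..<m'}"
    using assms by (auto simp: div_less_iff_less_mult mult.commute)
qed

lemma card_band_row:
  "0 < g \<Longrightarrow> d \<le> g \<Longrightarrow> card {j. j < g*n' \<and> cyclic_offset g r j < d} = d * n'"
  using bij_betw_same_card[OF bij_betw_band_row] by (simp add: card_cartesian_product)

lemma card_band_column: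
  "0 < g \<Longrightarrow> d \<le> g \<Longrightarrow> card {r. r < g*m' \<and> cyclic_offset g r j < d} = d * m'"
  using bij_betw_same_card[OF bij_betw_band_column] by (simp add: card_cartesian_product)

section \<open>Bands of width at least three\<close>

locale wide_band =
  fixes g m' n' c h d :: nat
  assumes g_pos: "0 < g" and m'_pos: "0 < m'" and n'_pos: "0 < n'" and c_pos: "0 < c"
    and h_pos: "1 \<le> h" and d_eq: "d = 2*h+1" and d_le: "d \<le> g"
    and odd_Q: "odd (c*g*m'*n')"
begin

abbreviation "Q \<equiv> c*g*m'*n'"

definition cell_index :: "nat \<Rightarrow> nat \<Rightarrow> nat \<Rightarrow> nat" where
  "cell_index i r j = c*(n'*r + j div g) + i"

text \<open>Multiplied by d, the correction cancels the low digits, which add up to h d over {..<d}.\<close>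

definition correction :: "nat \<Rightarrow> int" where
  "correction e = (if e = 0 then - int h else 0)"

definition entry :: "nat \<Rightarrow> int \<Rightarrow> int" where
  "entry e u = int e + int d * ((zero_sum_weight h e * u + correction e) mod int Q)"

definition label :: "nat \<Rightarrow> nat \<Rightarrow> nat \<Rightarrow> int" where
  "label i r j = entry (cyclic_offset g r j) (int (cell_index i r j))"

lemma cell_index_less:
  assumes "i < c" "r < g*m'" "j < g*n'"
  shows "cell_index i r j < Q"
proof -
  have "j div g < n'"
    using assms g_pos by (simp add: div_less_iff_less_mult mult.commute)
  have "cell_index i r j < c*(n'*r + j div g + 1)"
    using assms by (simp add: cell_index_def)
  also have "\<dots> \<le> c*(n'*(r+1))"
    using \<open>j div g < n'\<close> by (intro mult_le_mono2) simp
  also have "\<dots> \<le> c*(n'*(g*m'))"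
    using assms by (intro mult_le_mono2) simp
  finally show ?thesis
    by (simp add: algebra_simps)
qed

lemma cell_index_inj:
  assumes "i < c" "i' < c" "j < g*n'" "j' < g*n'" "cell_index i r j = cell_index i' r' j'"
  shows "i = i' \<and> r = r' \<and> j div g = j' div g"
proof -
  have "i = i'"
    using arg_cong[OF assms(5), of "\<lambda>x. x mod c"] assms(1,2) by (simp add: cell_index_def)
  then have "n'*r + j div g = n'*r' + j' div g"
    using assms(5) c_pos by (simp add: cell_index_def)
  moreover have "j div g < n'" "j' div g < n'"
    using assms(3,4) g_pos by (simp_all add: div_less_iff_less_mult mult.commute)
  then have "(n'*r + j div g) div n' = r" "(n'*r + j div g) mod n' = j div g"
    and "(n'*r' + j' div g) div n' = r'" "(n'*r' + j' div g) mod n' = j' div g"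
    by simp_all
  ultimately have "r = r'" "j div g = j' div g"
    by metis+
  with \<open>i = i'\<close> show ?thesis
    by simp
qed

lemma label_bounds:
  "cyclic_offset g r j < d \<Longrightarrow> 0 \<le> label i r j \<and> label i r j < int (d*Q)"
  using two_digit_bounds[of "int (cyclic_offset g r j)" "int d" "int Q"] c_pos g_pos m'_pos n'_pos
  by (simp add: label_def entry_def)

lemma inj_on_label:
  "inj_on (\<lambda>(i, r, j). label i r j) {(i, r, j). i < c \<and> r < g*m' \<and> j < g*n' \<and> cyclic_offset g r j < d}"
proof (rule two_digit_inj_on[where P = "\<lambda>(i, r, j). int (cyclic_offset g r j)"
      and u = "\<lambda>(i, r, j). int (cell_index i r j)" and w = "\<lambda>(i, r, j). zero_sum_weight h (cyclic_offset g r j)"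
      and b = "\<lambda>(i, r, j). correction (cyclic_offset g r j)" and D = "int d" and Q = "int Q"],
    goal_cases)
  case (6 p q)
  then obtain i r j i' r' j' where cells: "p = (i, r, j)" "q = (i', r', j')"
    "i < c" "r < g*m'" "j < g*n'" "i' < c" "r' < g*m'" "j' < g*n'"
    and eq: "cyclic_offset g r j = cyclic_offset g r' j'" "cell_index i r j = cell_index i' r' j'"
    by auto
  then have "i = i'" "r = r'" "j div g = j' div g"
    using cell_index_inj by blast+
  moreover have "j mod g = j' mod g"
    using mod_add_cyclic_offset[OF g_pos, of r j] mod_add_cyclic_offset[OF g_pos, of r' j'] eq \<open>r = r'\<close>
    by simp
  ultimately show ?case
    using cells by (metis div_mult_mod_eq)
qed (use cell_index_less odd_Q coprime_zero_sum_weight in \<open>auto simp: label_def entry_def simp del: of_nat_mult\<close>)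

lemma sum_weight: "(\<Sum>e<d. zero_sum_weight h e) = 0"
  using sum_zero_sum_weight[OF h_pos] by (simp add: d_eq)

lemma sum_mult_weight: "(\<Sum>e<d. int e * zero_sum_weight h e) = 0"
  using sum_mult_zero_sum_weight[OF h_pos] by (simp add: d_eq)

lemma sum_entry_high_digits:
  fixes U :: "nat \<Rightarrow> nat \<Rightarrow> int" and L :: nat
  shows "(\<Sum>e<d. \<Sum>x<L. int e + int d * (zero_sum_weight h e * U e x + correction e))
     = int d * (\<Sum>e<d. zero_sum_weight h e * (\<Sum>x<L. U e x))"
proof -
  have "(\<Sum>e<d. int e) = int h * int d"
    using sum_lessThan_odd[of h] by (simp add: d_eq)
  moreover have "(\<Sum>e<d. correction e) = - int h"
    by (simp add: correction_def d_eq)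
  moreover have "(\<Sum>e<d. \<Sum>x<L. int e + int d * (zero_sum_weight h e * U e x + correction e))
      = int L * (\<Sum>e<d. int e) + int d * int L * (\<Sum>e<d. correction e)
        + int d * (\<Sum>e<d. zero_sum_weight h e * (\<Sum>x<L. U e x))"
    by (simp add: sum.distrib sum_distrib_left algebra_simps)
  ultimately show ?thesis
    by (simp add: algebra_simps)
qed

lemma dvd_row_sum_label:
  "int (d*Q) dvd (\<Sum>j | j < g*n' \<and> cyclic_offset g r j < d. label i r j)"
proof -
  let ?U = "\<lambda>t. int (c*(n'*r + t) + i)"
  have "(\<Sum>j | j < g*n' \<and> cyclic_offset g r j < d. label i r j)
      = (\<Sum>p\<in>{..<d} \<times> {..<n'}. label i r ((\<lambda>(e, t). g*t + (r+e) mod g) p))"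
    by (rule sum.reindex_bij_betw[OF bij_betw_band_row[OF g_pos d_le], symmetric])
  also have "\<dots> = (\<Sum>(e, t)\<in>{..<d} \<times> {..<n'}. entry e (?U t))"
    using g_pos d_le by (intro sum.cong) (auto simp: label_def cell_index_def cyclic_offset_band_column)
  finally have "int (d*Q) dvd (\<Sum>j | j < g*n' \<and> cyclic_offset g r j < d. label i r j)
      \<longleftrightarrow> int d * int Q dvd (\<Sum>(e, t)\<in>{..<d} \<times> {..<n'}.
            int e + int d * (zero_sum_weight h e * ?U t + correction e))"
    unfolding entry_def case_prod_beta by (simp only: of_nat_mult dvd_sum_two_digit_iff)
  also have "(\<Sum>(e, t)\<in>{..<d} \<times> {..<n'}. int e + int d * (zero_sum_weight h e * ?U t + correction e))
      = int d * ((\<Sum>e<d. zero_sum_weight h e) * (\<Sum>t<n'. ?U t))"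
    by (simp add: sum.cartesian_product' sum_entry_high_digits sum_distrib_right)
  finally show ?thesis
    by (simp add: sum_weight)
qed

lemma dvd_column_sum_label:
  "int (d*Q) dvd (\<Sum>r | r < g*m' \<and> cyclic_offset g r j < d. label i r j)"
proof -
  \<comment> \<open>the row of offset e in block q is g q + (j - e) - g D e\<close>
  define D where "D e = (int j - int e) div int g" for e
  define A where "A = int c * int n' * int g * (\<Sum>q<m'. int q)
    + int m' * (int c * (int n' * int j + int (j div g)) + int i)"
  let ?U = "\<lambda>e q. int (cell_index i (g*q + cyclic_offset g e j) j)"
  have U: "(\<Sum>q<m'. ?U e q) = A - int (c*n'*m') * int e - int Q * D e" for e
  proof -
    have offset: "int (cyclic_offset g e j) = int j - int e - D e * int g"
      using g_pos by (simp add: int_cyclic_offset D_def minus_div_mult_eq_mod)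
    show ?thesis
      by (simp add: cell_index_def A_def offset sum.distrib sum_subtractf sum_distrib_left algebra_simps)
  qed
  have "(\<Sum>r | r < g*m' \<and> cyclic_offset g r j < d. label i r j)
      = (\<Sum>p\<in>{..<d} \<times> {..<m'}. label i ((\<lambda>(e, q). g*q + cyclic_offset g e j) p) j)"
    by (rule sum.reindex_bij_betw[OF bij_betw_band_column[OF g_pos d_le], symmetric])
  also have "\<dots> = (\<Sum>(e, q)\<in>{..<d} \<times> {..<m'}. entry e (?U e q))"
    using g_pos d_le by (intro sum.cong) (auto simp: label_def cyclic_offset_band_row)
  finally have "int (d*Q) dvd (\<Sum>r | r < g*m' \<and> cyclic_offset g r j < d. label i r j)
      \<longleftrightarrow> int d * int Q dvd (\<Sum>(e, q)\<in>{..<d} \<times> {..<m'}.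
            int e + int d * (zero_sum_weight h e * ?U e q + correction e))"
    unfolding entry_def case_prod_beta by (simp only: of_nat_mult dvd_sum_two_digit_iff)
  also have "(\<Sum>(e, q)\<in>{..<d} \<times> {..<m'}. int e + int d * (zero_sum_weight h e * ?U e q + correction e))
      = int d * (\<Sum>e<d. zero_sum_weight h e * (A - int (c*n'*m') * int e - int Q * D e))"
    by (simp add: sum.cartesian_product' sum_entry_high_digits U)
  also have "\<dots> = int d * (A * (\<Sum>e<d. zero_sum_weight h e)
      - int (c*n'*m') * (\<Sum>e<d. int e * zero_sum_weight h e)
      - int Q * (\<Sum>e<d. zero_sum_weight h e * D e))"
    by (simp add: sum.distrib sum_subtractf sum_distrib_left algebra_simps)
  finally show ?thesis
    by (simp add: sum_weight sum_mult_weight)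
qed

theorem is_MS0_Zmod_wide_band:
  "\<exists>A. is_MS0_Zmod (c*(g*m')*(d*n')) (g*m') (g*n') (d*n') (d*m') c A"
proof -
  have N: "c*(g*m')*(d*n') = d*Q"
    by (simp add: ac_simps)
  show ?thesis
    unfolding N
    by (rule is_MS0_Zmod_of_labelling[where F = "\<lambda>r j. cyclic_offset g r j < d" and V = label])
       (use card_band_row card_band_column g_pos d_le N inj_on_label label_bounds
          dvd_row_sum_label dvd_column_sum_label in auto)
qed

end

section \<open>A zero-sum labelling of a coprime grid\<close>

locale coprime_grid =
  fixes k s hk hs :: nat
  assumes k_eq: "k = 2*hk+1" and s_eq: "s = 2*hs+1" and hk_pos: "1 \<le> hk" and hs_pos: "1 \<le> hs"
    and coprime_k_s: "coprime k s"
begin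

lemma k_pos: "0 < k" and s_pos: "0 < s"
  using k_eq s_eq by simp_all

lemma sum_weight_k: "(\<Sum>x<k. zero_sum_weight hk x) = 0"
  using sum_zero_sum_weight[OF hk_pos] by (simp add: k_eq)

lemma sum_weight_s: "(\<Sum>y<s. zero_sum_weight hs y) = 0"
  using sum_zero_sum_weight[OF hs_pos] by (simp add: s_eq)

definition residue_s :: "nat \<Rightarrow> nat \<Rightarrow> nat" where
  "residue_s x y = nat ((zero_sum_weight hk x * int y) mod int s)"

definition residue_k :: "nat \<Rightarrow> nat \<Rightarrow> nat" where
  "residue_k x y = nat (((int x - int hk) * zero_sum_weight hs (residue_s x y)) mod int k)"

text \<open>
  In each row y \<mapsto> residue_s x y permutes the residues modulo s, and in each column residue_k is
  represented by a function antisymmetric under x \<mapsto> 2 hk - x; together with the zero sums of the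
  weights this makes all line sums of the grid labelling vanish modulo k and modulo s.
\<close>

definition grid_label :: "nat \<Rightarrow> nat \<Rightarrow> nat" where
  "grid_label x y = (THE z. z < k*s \<and> [z = residue_k x y] (mod k) \<and> [z = residue_s x y] (mod s))"

lemma grid_label:
  "grid_label x y < k*s" "grid_label x y mod k = residue_k x y" "grid_label x y mod s = residue_s x y"
proof -
  have "grid_label x y < k*s \<and> [grid_label x y = residue_k x y] (mod k) \<and> [grid_label x y = residue_s x y] (mod s)"
    unfolding grid_label_def
    by (rule theI', rule binary_chinese_remainder_unique_nat) (use coprime_k_s k_pos s_pos in auto)
  moreover have "residue_k x y < k" "residue_s x y < s"
    using k_pos s_pos by (simp_all add: residue_k_def residue_s_def nat_less_iff)
  ultimately show "grid_label x y < k*s" "grid_label x y mod k = residue_k x y"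
      "grid_label x y mod s = residue_s x y"
    by (simp_all add: cong_def)
qed

lemma int_grid_label_mod:
  "int (grid_label x y) mod int k = ((int x - int hk) * zero_sum_weight hs (residue_s x y)) mod int k"
  "int (grid_label x y) mod int s = (zero_sum_weight hk x * int y) mod int s"
  using grid_label(2,3)[of x y] k_pos s_pos by (simp_all add: residue_k_def residue_s_def flip: of_nat_mod)

lemma bij_betw_residue_s: "bij_betw (residue_s x) {..<s} {..<s}"
  unfolding residue_s_def
  by (rule bij_betw_mult_mod) (use coprime_zero_sum_weight s_eq s_pos in simp_all)

lemma grid_label_inj:
  assumes "x < k" "y < s" "x' < k" "y' < s" "grid_label x y = grid_label x' y'"
  shows "x = x' \<and> y = y'"
proof -
  have b: "residue_s x y = residue_s x' y'" and a: "residue_k x y = residue_k x' y'"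
    using grid_label(2,3) assms(5) by metis+
  let ?w = "zero_sum_weight hs (residue_s x y)"
  have "(?w * int x + - ?w * int hk) mod int k = (?w * int x' + - ?w * int hk) mod int k"
    using arg_cong[OF a, of int] b k_pos by (simp add: residue_k_def algebra_simps)
  moreover have "coprime ?w (int k)"
    using k_eq by (intro coprime_zero_sum_weight) simp
  ultimately have "int x = int x'"
    using assms(1,3) mod_affine_inj[of ?w "int k" "int x" "int x'" "- ?w * int hk"] by simp
  then have "x = x'"
    by simp
  have "(zero_sum_weight hk x * int y + 0) mod int s = (zero_sum_weight hk x * int y' + 0) mod int s"
    using arg_cong[OF b, of int] \<open>x = x'\<close> s_pos by (simp add: residue_s_def)
  moreover have "coprime (zero_sum_weight hk x) (int s)"
    using s_eq by (intro coprime_zero_sum_weight) simp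
  ultimately have "int y = int y'"
    using assms(2,4) mod_affine_inj[of "zero_sum_weight hk x" "int s" "int y" "int y'" 0] by simp
  with \<open>x = x'\<close> show ?thesis
    by simp
qed

lemma dvd_row_sum_grid_label: "k*s dvd (\<Sum>y<s. grid_label x y)"
proof (rule divides_mult[OF _ _ coprime_k_s])
  have "[(\<Sum>y<s. int (grid_label x y))
      = (\<Sum>y<s. (int x - int hk) * zero_sum_weight hs (residue_s x y))] (mod int k)"
    by (rule cong_sum) (simp add: cong_def int_grid_label_mod)
  moreover have "(\<Sum>y<s. (int x - int hk) * zero_sum_weight hs (residue_s x y)) = 0"
    using sum.reindex_bij_betw[OF bij_betw_residue_s, of "zero_sum_weight hs"] sum_weight_s
    by (simp flip: sum_distrib_left)
  ultimately have "int k dvd int (\<Sum>y<s. grid_label x y)"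
    by (simp add: cong_dvd_iff)
  then show "k dvd (\<Sum>y<s. grid_label x y)"
    by (simp only: int_dvd_int_iff)
  have "[(\<Sum>y<s. grid_label x y) = (\<Sum>y<s. residue_s x y)] (mod s)"
    by (rule cong_sum) (simp add: cong_def grid_label mod_less residue_s_def nat_less_iff s_pos)
  moreover have "(\<Sum>y<s. residue_s x y) = hs * s"
    using sum.reindex_bij_betw[OF bij_betw_residue_s, of id] sum_lessThan_odd[of hs, where 'a = nat]
    by (simp add: s_eq)
  ultimately show "s dvd (\<Sum>y<s. grid_label x y)"
    by (simp add: cong_dvd_iff)
qed

lemma dvd_column_sum_grid_label: "k*s dvd (\<Sum>x<k. grid_label x y)"
proof (rule divides_mult[OF _ _ coprime_k_s])
  have "[(\<Sum>x<k. int (grid_label x y))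
      = (\<Sum>x<k. (int x - int hk) * zero_sum_weight hs (residue_s x y))] (mod int k)"
    by (rule cong_sum) (simp add: cong_def int_grid_label_mod)
  moreover have "(\<Sum>x<k. (int x - int hk) * zero_sum_weight hs (residue_s x y)) = 0"
  proof (rule sum_lessThan_antisymmetric)
    fix x assume "x < k"
    then have "residue_s (k - Suc x) y = residue_s x y"
      using zero_sum_weight_reflect[of x hk] by (simp add: residue_s_def k_eq)
    with \<open>x < k\<close> show "(int (k - Suc x) - int hk) * zero_sum_weight hs (residue_s (k - Suc x) y)
        = - ((int x - int hk) * zero_sum_weight hs (residue_s x y))"
      by (simp add: k_eq of_nat_diff algebra_simps)
  qed
  ultimately have "int k dvd int (\<Sum>x<k. grid_label x y)"
    by (simp add: cong_dvd_iff)
  then show "k dvd (\<Sum>x<k. grid_label x y)"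
    by (simp only: int_dvd_int_iff)
  have "[(\<Sum>x<k. int (grid_label x y)) = (\<Sum>x<k. zero_sum_weight hk x * int y)] (mod int s)"
    by (rule cong_sum) (simp add: cong_def int_grid_label_mod)
  moreover have "(\<Sum>x<k. zero_sum_weight hk x * int y) = 0"
    using sum_weight_k by (simp flip: sum_distrib_right)
  ultimately have "int s dvd int (\<Sum>x<k. grid_label x y)"
    by (simp add: cong_dvd_iff)
  then show "s dvd (\<Sum>x<k. grid_label x y)"
    by (simp only: int_dvd_int_iff)
qed

end

section \<open>Bands of width one\<close>

locale thin_band = coprime_grid +
  fixes g c :: nat
  assumes g_pos: "0 < g" and c_pos: "0 < c" and odd_g_c: "odd (g*c)"
begin

definition row_quotient :: "nat \<Rightarrow> int" where
  "row_quotient x = int ((\<Sum>y<s. grid_label x y) div (k*s))"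

definition column_quotient :: "nat \<Rightarrow> int" where
  "column_quotient y = int ((\<Sum>x<k. grid_label x y) div (k*s))"

lemma row_quotient: "(\<Sum>y<s. int (grid_label x y)) = int (k*s) * row_quotient x"
  using dvd_row_sum_grid_label[of x] by (simp add: row_quotient_def flip: of_nat_sum of_nat_mult)

lemma column_quotient: "(\<Sum>x<k. int (grid_label x y)) = int (k*s) * column_quotient y"
  using dvd_column_sum_grid_label[of y] by (simp add: column_quotient_def flip: of_nat_sum of_nat_mult)

lemma sum_column_quotient: "(\<Sum>y<s. column_quotient y) = (\<Sum>x<k. row_quotient x)"
proof -
  have "int (k*s) * (\<Sum>y<s. column_quotient y) = int (k*s) * (\<Sum>x<k. row_quotient x)"
    unfolding sum_distrib_left column_quotient[symmetric] row_quotient[symmetric]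
    by (rule sum.swap)
  then show ?thesis
    using k_pos s_pos by simp
qed

definition correction :: "nat \<Rightarrow> nat \<Rightarrow> int" where
  "correction x y = (if y = 0 then - row_quotient x else 0) + (if x = 0 then - column_quotient y else 0)
     + (if x = 0 \<and> y = 0 then (\<Sum>x<k. row_quotient x) else 0)"

lemma sum_row_correction: "(\<Sum>y<s. correction x y) = - row_quotient x"
  using s_pos by (cases "x = 0") (simp_all add: correction_def sum.distrib sum_subtractf sum_negf sum_column_quotient)

lemma sum_column_correction: "(\<Sum>x<k. correction x y) = - column_quotient y"
  using k_pos by (cases "y = 0") (simp_all add: correction_def sum.distrib sum_subtractf sum_negf)

text \<open>On the band j mod g = r mod g, so the index is constant along every row and every column.\<close>

definition cell_index :: "nat \<Rightarrow> nat \<Rightarrow> nat" where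
  "cell_index i r = i*g + r mod g"

definition label :: "nat \<Rightarrow> nat \<Rightarrow> nat \<Rightarrow> int" where
  "label i r j = int (grid_label (r div g) (j div g)) + int (k*s) *
     ((zero_sum_weight hk (r div g) * zero_sum_weight hs (j div g) * int (cell_index i r)
       + correction (r div g) (j div g)) mod int (g*c))"

lemma cell_index_less: "i < c \<Longrightarrow> cell_index i r < g*c"
proof -
  assume "i < c"
  have "cell_index i r < (i+1)*g"
    using g_pos by (simp add: cell_index_def)
  also have "\<dots> \<le> c*g"
    using \<open>i < c\<close> by (intro mult_le_mono1) simp
  finally show ?thesis
    by (simp add: mult.commute)
qed

lemma label_bounds: "0 \<le> label i r j \<and> label i r j < int (k*s*(g*c))"
proof -
  have "int (grid_label (r div g) (j div g)) < int (k*s)"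
    using grid_label(1) by (simp only: of_nat_less_iff)
  then show ?thesis
    using two_digit_bounds[of "int (grid_label (r div g) (j div g))" "int (k*s)" "int (g*c)"] g_pos c_pos
    by (simp add: label_def)
qed

lemma grid_label_block_inj:
  assumes "r < g*k" "j < g*s" "r' < g*k" "j' < g*s"
    and "grid_label (r div g) (j div g) = grid_label (r' div g) (j' div g)"
  shows "r div g = r' div g \<and> j div g = j' div g"
proof (rule grid_label_inj)
  show "r div g < k" "j div g < s" "r' div g < k" "j' div g < s"
    using assms(1-4) g_pos by (simp_all add: div_less_iff_less_mult mult.commute)
qed (fact assms(5))

lemma inj_on_label:
  "inj_on (\<lambda>(i, r, j). label i r j) {(i, r, j). i < c \<and> r < g*k \<and> j < g*s \<and> cyclic_offset g r j < 1}"
proof (rule two_digit_inj_on[where P = "\<lambda>(i, r, j). int (grid_label (r div g) (j div g))"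
      and u = "\<lambda>(i, r, j). int (cell_index i r)"
      and w = "\<lambda>(i, r, j). zero_sum_weight hk (r div g) * zero_sum_weight hs (j div g)"
      and b = "\<lambda>(i, r, j). correction (r div g) (j div g)" and D = "int (k*s)" and Q = "int (g*c)"],
    goal_cases)
  case (3 p)
  then show ?case
    using cell_index_less by (auto simp del: of_nat_mult)
next
  case (4 p)
  have "odd (int (g*c))"
    using odd_g_c by simp
  then show ?case
    using coprime_zero_sum_weight by (simp add: case_prod_beta coprime_mult_left_iff del: of_nat_mult)
next
  case (5 p q)
  then obtain i r j i' r' j' where "p = (i, r, j)" "q = (i', r', j')"
    and "r div g = r' div g" "j div g = j' div g"
    using grid_label_block_inj by fastforce
  then show ?case
    by simp
next
  case (6 p q)
  then obtain i r j i' r' j' where cells: "p = (i, r, j)" "q = (i', r', j')"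
    "i < c" "r < g*k" "j < g*s" "cyclic_offset g r j < 1"
    "i' < c" "r' < g*k" "j' < g*s" "cyclic_offset g r' j' < 1"
    and eq: "grid_label (r div g) (j div g) = grid_label (r' div g) (j' div g)" "cell_index i r = cell_index i' r'"
    by auto
  then have "r div g = r' div g" "j div g = j' div g"
    using grid_label_block_inj by blast+
  moreover have "i = i'" "r mod g = r' mod g"
    using arg_cong[OF eq(2), of "\<lambda>x. x div g"] arg_cong[OF eq(2), of "\<lambda>x. x mod g"] g_pos
    by (simp_all add: cell_index_def)
  moreover have "j mod g = j' mod g"
    using mod_eq_if_cyclic_offset_less_one[OF g_pos] cells \<open>r mod g = r' mod g\<close> by metis
  ultimately show ?case
    using cells by (metis div_mult_mod_eq)
qed (use grid_label(1) in \<open>auto simp: label_def simp del: of_nat_mult\<close>)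

lemma dvd_row_sum_label:
  "int (k*s*(g*c)) dvd (\<Sum>j | j < g*s \<and> cyclic_offset g r j < 1. label i r j)"
proof -
  let ?x = "r div g"
  have "(\<Sum>j | j < g*s \<and> cyclic_offset g r j < 1. label i r j)
      = (\<Sum>p\<in>{..<1} \<times> {..<s}. label i r ((\<lambda>(e, t). g*t + (r+e) mod g) p))"
    by (rule sum.reindex_bij_betw[OF bij_betw_band_row[OF g_pos], symmetric]) (use g_pos in simp)
  also have "\<dots> = (\<Sum>t<s. int (grid_label ?x t) + int (k*s) *
      ((zero_sum_weight hk ?x * zero_sum_weight hs t * int (cell_index i r) + correction ?x t) mod int (g*c)))"
    using g_pos by (simp add: sum.cartesian_product' label_def cell_index_def)
  finally have "int (k*s*(g*c)) dvd (\<Sum>j | j < g*s \<and> cyclic_offset g r j < 1. label i r j)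
      \<longleftrightarrow> int (k*s) * int (g*c) dvd (\<Sum>t<s. int (grid_label ?x t) + int (k*s) *
          (zero_sum_weight hk ?x * zero_sum_weight hs t * int (cell_index i r) + correction ?x t))"
    by (simp only: of_nat_mult[of "k*s"] dvd_sum_two_digit_iff)
  also have "(\<Sum>t<s. int (grid_label ?x t) + int (k*s) *
      (zero_sum_weight hk ?x * zero_sum_weight hs t * int (cell_index i r) + correction ?x t))
    = int (k*s) * (row_quotient ?x + zero_sum_weight hk ?x * int (cell_index i r) * (\<Sum>t<s. zero_sum_weight hs t)
        + (\<Sum>t<s. correction ?x t))"
    by (simp add: sum.distrib row_quotient sum_distrib_left sum_distrib_right algebra_simps)
  finally show ?thesis
    by (simp add: sum_weight_s sum_row_correction)
qed

lemma dvd_column_sum_label: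
  "int (k*s*(g*c)) dvd (\<Sum>r | r < g*k \<and> cyclic_offset g r j < 1. label i r j)"
proof -
  let ?y = "j div g"
  have "(\<Sum>r | r < g*k \<and> cyclic_offset g r j < 1. label i r j)
      = (\<Sum>p\<in>{..<1} \<times> {..<k}. label i ((\<lambda>(e, q). g*q + cyclic_offset g e j) p) j)"
    by (rule sum.reindex_bij_betw[OF bij_betw_band_column[OF g_pos], symmetric]) (use g_pos in simp)
  also have "\<dots> = (\<Sum>q<k. int (grid_label q ?y) + int (k*s) *
      ((zero_sum_weight hk q * zero_sum_weight hs ?y * int (i*g + j mod g) + correction q ?y) mod int (g*c)))"
    using g_pos by (simp add: sum.cartesian_product' label_def cell_index_def cyclic_offset_def flip: of_nat_mod)
  finally have "int (k*s*(g*c)) dvd (\<Sum>r | r < g*k \<and> cyclic_offset g r j < 1. label i r j)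
      \<longleftrightarrow> int (k*s) * int (g*c) dvd (\<Sum>q<k. int (grid_label q ?y) + int (k*s) *
          (zero_sum_weight hk q * zero_sum_weight hs ?y * int (i*g + j mod g) + correction q ?y))"
    by (simp only: of_nat_mult[of "k*s"] dvd_sum_two_digit_iff)
  also have "(\<Sum>q<k. int (grid_label q ?y) + int (k*s) *
      (zero_sum_weight hk q * zero_sum_weight hs ?y * int (i*g + j mod g) + correction q ?y))
    = int (k*s) * (column_quotient ?y + zero_sum_weight hs ?y * int (i*g + j mod g) * (\<Sum>q<k. zero_sum_weight hk q)
        + (\<Sum>q<k. correction q ?y))"
    by (simp add: sum.distrib column_quotient sum_distrib_left sum_distrib_right algebra_simps)
  finally show ?thesis
    by (simp add: sum_weight_k sum_column_correction)
qed

theorem is_MS0_Zmod_thin_band: "\<exists>A. is_MS0_Zmod (c*(g*k)*s) (g*k) (g*s) s k c A"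
proof -
  have N: "c*(g*k)*s = k*s*(g*c)"
    by (simp add: ac_simps)
  show ?thesis
    unfolding N
    by (rule is_MS0_Zmod_of_labelling[where F = "\<lambda>r j. cyclic_offset g r j < 1" and V = label])
       (use card_band_row[of g 1] card_band_column[of g 1] g_pos N inj_on_label label_bounds
          dvd_row_sum_label dvd_column_sum_label in auto)
qed

end

section \<open>Reduction to bands\<close>

lemma MS0_parameters:
  fixes m n s k :: nat
  assumes "0 < m" "0 < n" "0 < s" "s \<le> n" "m * s = n * k"
  obtains g m' n' d where "m = g*m'" "n = g*n'" "s = d*n'" "k = d*m'" "d \<le> g" "coprime m' n'"
    "0 < g" "0 < m'" "0 < n'"
proof -
  define g where "g = gcd m n"
  define m' n' where "m' = m div g" and "n' = n div g"
  have g: "0 < g" "m = g*m'" "n = g*n'"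
    using assms(1) by (simp_all add: g_def m'_def n'_def)
  have "coprime m' n'"
    using assms(1) by (simp add: g_def m'_def n'_def div_gcd_coprime)
  have "m' * s = n' * k"
    using assms(5) g by (simp add: algebra_simps)
  then have "n' dvd m' * s"
    by simp
  then obtain d where s: "s = n' * d"
    using \<open>coprime m' n'\<close> by (auto simp: coprime_commute coprime_dvd_mult_right_iff)
  have "0 < n'"
    using assms(2) g by simp
  then have "k = d * m'"
    using \<open>m' * s = n' * k\<close> s by (simp add: algebra_simps)
  moreover have "d \<le> g"
    using assms(4) s g \<open>0 < n'\<close> by (simp add: mult.commute)
  ultimately show ?thesis
    using that g s \<open>coprime m' n'\<close> \<open>0 < n'\<close> assms(1) by (simp add: mult.commute)
qed

lemma MS0_exists_band:
  assumes dims: "m = g*m'" "n = g*n'" "s = d*n'" "k = d*m'" "d \<le> g"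
    and "coprime m' n'" "0 < g" "0 < m'" "0 < n'" "0 < c" "2 \<le> s" "2 \<le> k"
    and odd_N: "odd (n * k * c)"
  shows "MS0_exists m n s k c"
proof -
  have "odd d"
    using odd_N dims by simp
  then obtain h where h: "d = 2*h+1"
    by (auto elim: oddE)
  show ?thesis
  proof (cases "h = 0")
    case True
    interpret thin_band k s "k div 2" "s div 2" g c
      using assms h True by unfold_locales auto
    show ?thesis
      using is_MS0_Zmod_thin_band dims h True unfolding MS0_exists_def by (simp add: ac_simps)
  next
    case False
    interpret wide_band g m' n' c h d
      using assms h False by unfold_locales auto
    show ?thesis
      using is_MS0_Zmod_wide_band dims unfolding MS0_exists_def by (simp add: ac_simps)
  qed
qed

theorem mainTheorem8:
  fixes m n s k c :: nat
  assumes "0 < m" "0 < n" "0 < s" "0 < k" "0 < c"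
    and "2 \<le> s" "s \<le> n" "2 \<le> k" "k \<le> m" "m * s = n * k"
  shows "MS0_exists m n s k c \<longleftrightarrow> odd (n * k * c)"
proof
  assume "MS0_exists m n s k c"
  then obtain A where "is_MS0_Zmod (n * k * c) m n s k c A"
    unfolding MS0_exists_def ..
  then show "odd (n * k * c)"
    by (rule is_MS0_Zmod_odd) (use assms(2,4,5) in simp)
next
  assume "odd (n * k * c)"
  obtain g m' n' d where "m = g*m'" "n = g*n'" "s = d*n'" "k = d*m'" "d \<le> g"
    and "coprime m' n'" "0 < g" "0 < m'" "0 < n'"
    using MS0_parameters assms(1-3,7,10) by blast
  then show "MS0_exists m n s k c"
    using MS0_exists_band assms(5,6,8) \<open>odd (n * k * c)\<close> by blast
qed

end
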